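(* Let $G$ be a finite group, $\alpha\in\mathbb{Z}_{\ge0}$, and let $(A,M)$ be an irreducible NIM-rep of the near-group fusion ring $K(G,\alpha)$ whose basis is partitioned into $p$ $G$-orbits $O_1,\dots,O_p$, with $O_i\cong G/H_i$ as $G$-sets for subgroups $H_i\le G$. For $1\le i,j\le p$ let $c_{i,j}$ be the coefficient of $m'$ in $X\vartriangleright m$ for $m\in O_i$, $m'\in O_j$ (this is independent of the choice of $m,m'$). If $p=1$ then $\alpha=c_{1,1}[G:H_1]-|H_1|/c_{1,1}$. If $p\ge2$ then $\alpha=\sum_{j=1}^p\frac{c_{i,j}c_{j,q}}{c_{i,q}}[G:H_j]$ for any orbit labels $i\neq q$ with $c_{i,q}>0$.
   Context: The near-group fusion ring $K(G,\alpha)$ is the free $\mathbb{Z}$-module with basis $G\cup\{X\}$, with multiplication given by the group law on $G$, $gX=Xg=X$ for $g\in G$, and $X^2=\sum_{g\in G}g+\alpha X$; involution $g^*=g^{-1}$, $X^*=X$. A NIM-rep of a fusion ring $(R,B)$ is a nonzero left $R$-module $A$ which is a free $\mathbb{Z}$-module with a fixed basis $M$, such that each $b\vartriangleright m$ is a non-negative integer combination of elements of $M$, and $(b\vartriangleright m,m')=(m,b^*\vartriangleright m')$ for the form making $M$ orthonormal. The elements of $G$ permute $M$. A NIM-rep is irreducible if no proper nonempty subset of $M$ spans an $R$-submodule. *)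

theory Defs
  imports "HOL-Algebra.Coset" Complex_Main
begin

datatype 'g ng_basis = Gel 'g | Xel

definition ng_basis :: "('g, 'b) monoid_scheme \<Rightarrow> 'g ng_basis set" where
  "ng_basis G = Gel ` carrier G \<union> {Xel}"

fun ng_dual :: "('g, 'b) monoid_scheme \<Rightarrow> 'g ng_basis \<Rightarrow> 'g ng_basis" where
  "ng_dual G (Gel g) = Gel (inv\<^bsub>G\<^esub> g)"
| "ng_dual G Xel = Xel"

fun ng_coeff :: "('g, 'b) monoid_scheme \<Rightarrow> nat \<Rightarrow> 'g ng_basis \<Rightarrow> 'g ng_basis \<Rightarrow> 'g ng_basis \<Rightarrow> nat" where
  "ng_coeff G \<alpha> (Gel g) (Gel h) c = (if c = Gel (g \<otimes>\<^bsub>G\<^esub> h) then 1 else 0)"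
| "ng_coeff G \<alpha> (Gel g) Xel c = (if c = Xel then 1 else 0)"
| "ng_coeff G \<alpha> Xel (Gel g) c = (if c = Xel then 1 else 0)"
| "ng_coeff G \<alpha> Xel Xel c = (if c = Xel then \<alpha> else if c \<in> Gel ` carrier G then 1 else 0)"

text \<open>A NIM-rep of K(G,alpha) with basis M, given by its non-negative integer
  matrices: rho b m m' is the coefficient of m' in b acting on m.
  Conditions: unital left module (associativity written in coordinates),
  and the adjointness (b m, m') = (m, b* m').\<close>
definition ng_nim_rep ::
  "('g, 'b) monoid_scheme \<Rightarrow> nat \<Rightarrow> 'm set \<Rightarrow> ('g ng_basis \<Rightarrow> 'm \<Rightarrow> 'm \<Rightarrow> nat) \<Rightarrow> bool" where
  "ng_nim_rep G \<alpha> M \<rho> \<longleftrightarrow>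
     finite M \<and> M \<noteq> {} \<and>
     (\<forall>m\<in>M. \<forall>m'\<in>M. \<rho> (Gel \<one>\<^bsub>G\<^esub>) m m' = (if m = m' then 1 else 0)) \<and>
     (\<forall>a\<in>ng_basis G. \<forall>b\<in>ng_basis G. \<forall>m\<in>M. \<forall>m'\<in>M.
        (\<Sum>m''\<in>M. \<rho> b m m'' * \<rho> a m'' m') = (\<Sum>c\<in>ng_basis G. ng_coeff G \<alpha> a b c * \<rho> c m m')) \<and>
     (\<forall>b\<in>ng_basis G. \<forall>m\<in>M. \<forall>m'\<in>M. \<rho> b m m' = \<rho> (ng_dual G b) m' m)"

definition ng_nim_irreducible ::
  "('g, 'b) monoid_scheme \<Rightarrow> 'm set \<Rightarrow> ('g ng_basis \<Rightarrow> 'm \<Rightarrow> 'm \<Rightarrow> nat) \<Rightarrow> bool" where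
  "ng_nim_irreducible G M \<rho> \<longleftrightarrow>
     (\<forall>S. S \<subseteq> M \<and> S \<noteq> {} \<and>
          (\<forall>b\<in>ng_basis G. \<forall>m\<in>S. \<forall>m'\<in>M. \<rho> b m m' \<noteq> 0 \<longrightarrow> m' \<in> S) \<longrightarrow> S = M)"

text \<open>G-orbit of a basis element (group elements act by permutation matrices).\<close>
definition G_orbit ::
  "('g, 'b) monoid_scheme \<Rightarrow> 'm set \<Rightarrow> ('g ng_basis \<Rightarrow> 'm \<Rightarrow> 'm \<Rightarrow> nat) \<Rightarrow> 'm \<Rightarrow> 'm set" where
  "G_orbit G M \<rho> m = {m' \<in> M. \<exists>g\<in>carrier G. \<rho> (Gel g) m m' \<noteq> 0}"

definition left_cosets :: "('g, 'b) monoid_scheme \<Rightarrow> 'g set \<Rightarrow> 'g set set" where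
  "left_cosets G H = {g <#\<^bsub>G\<^esub> H | g. g \<in> carrier G}"

definition Gset_iso_cosets ::
  "('g, 'b) monoid_scheme \<Rightarrow> ('g ng_basis \<Rightarrow> 'm \<Rightarrow> 'm \<Rightarrow> nat) \<Rightarrow> 'm set \<Rightarrow> 'g set \<Rightarrow> bool" where
  "Gset_iso_cosets G \<rho> Orb H \<longleftrightarrow>
     (\<exists>\<phi>. bij_betw \<phi> Orb (left_cosets G H) \<and>
        (\<forall>g\<in>carrier G. \<forall>m\<in>Orb. \<forall>m'\<in>Orb. \<rho> (Gel g) m m' \<noteq> 0 \<longrightarrow> \<phi> m' = g <#\<^bsub>G\<^esub> \<phi> m))"

definition orbit_coeff ::
  "('g ng_basis \<Rightarrow> 'm \<Rightarrow> 'm \<Rightarrow> nat) \<Rightarrow> (nat \<Rightarrow> 'm set) \<Rightarrow> nat \<Rightarrow> nat \<Rightarrow> nat" where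
  "orbit_coeff \<rho> Orb i j = \<rho> Xel (SOME m. m \<in> Orb i) (SOME m'. m' \<in> Orb j)"

end

theory Submission
  imports Defs "HOL-Algebra.Left_Coset"
begin

text \<open>Composing \<open>\<rho>(g)\<close> with \<open>\<rho>(g\<inverse>) = \<rho>(g)\<^sup>T\<close> gives the identity, so every row of the
  non-negative integer matrix \<open>\<rho>(g)\<close> has squared norm 1: the group acts on \<open>M\<close> by permutations.
  Since \<open>gX = X = Xg\<close>, the matrix of \<open>X\<close> is constant on products of orbits, with value \<open>c\<^sub>i\<^sub>j\<close>
  on \<open>O\<^sub>i \<times> O\<^sub>j\<close>. Comparing the \<open>(m, m')\<close> entries of both sides of \<open>X\<^sup>2 = \<Sum>g + \<alpha>X\<close> for
  \<open>m \<in> O\<^sub>i\<close>, \<open>m' \<in> O\<^sub>q\<close> gives \<open>\<Sum>\<^sub>j |O\<^sub>j| c\<^sub>i\<^sub>j c\<^sub>j\<^sub>q = #{g. gm = m'} + \<alpha> c\<^sub>i\<^sub>q\<close>, where \<open>|O\<^sub>j| = [G:H\<^sub>j]\<close>.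
  For \<open>i \<noteq> q\<close> the middle term vanishes; for a single orbit, summing over \<open>m'\<close> turns it
  into \<open>|G|\<close>, and the identity becomes \<open>[G:H] c\<^sup>2 = |H| + \<alpha> c\<close>.\<close>

lemma sum_power2_eq_1_imp_unit_vector:
  fixes f :: "'a \<Rightarrow> nat"
  assumes "finite S" "(\<Sum>x\<in>S. (f x)\<^sup>2) = 1"
  shows "\<exists>k\<in>S. f k = 1 \<and> (\<forall>x\<in>S. x \<noteq> k \<longrightarrow> f x = 0)"
proof -
  obtain k where k: "k \<in> S" "f k \<noteq> 0"
    using assms by (metis (mono_tags, lifting) power_zero_numeral sum.neutral zero_neq_one)
  have "(\<Sum>x\<in>S. (f x)\<^sup>2) = (f k)\<^sup>2 + (\<Sum>x\<in>S-{k}. (f x)\<^sup>2)"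
    using assms(1) k(1) by (rule sum.remove)
  moreover have "(f k)\<^sup>2 \<ge> 1"
    using k(2) by (simp add: Suc_le_eq)
  ultimately have "(f k)\<^sup>2 = 1" and rest: "(\<Sum>x\<in>S-{k}. (f x)\<^sup>2) = 0"
    using assms(2) by linarith+
  then have "f k = 1"
    by simp
  moreover have "\<forall>x\<in>S. x \<noteq> k \<longrightarrow> f x = 0"
    using rest assms(1) by simp
  ultimately show ?thesis
    using k(1) by blast
qed

lemma card_mult_card_subgroup_if_iso_cosets:
  assumes "group G" "finite (carrier G)" "subgroup H G" "Gset_iso_cosets G \<rho> S H"
  shows "card S * card H = card (carrier G)"
proof -
  obtain \<phi> where "bij_betw \<phi> S (left_cosets G H)"
    using assms(4) unfolding Gset_iso_cosets_def by blast
  then have "card S = card (lcosets\<^bsub>G\<^esub> H)"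
    by (simp add: bij_betw_same_card left_cosets_def LCOSETS_def setcompr_eq_image
        UNION_singleton_eq_range)
  then show ?thesis
    using group.l_lagrange[OF assms(1-3)] by (simp add: order_def)
qed

lemma sum_ng_basis_delta:
  assumes "finite (carrier G)" "b \<in> ng_basis G"
  shows "(\<Sum>c\<in>ng_basis G. (if c = b then 1 else 0) * f c) = (f b :: nat)"
  using assms by (simp add: ng_basis_def if_distrib[of "\<lambda>x. x * y" for y] cong: if_cong)

locale near_group_nim = group G for G :: "('g, 'b) monoid_scheme" (structure) +
  fixes \<alpha> :: nat and M :: "'m set" and \<rho> :: "'g ng_basis \<Rightarrow> 'm \<Rightarrow> 'm \<Rightarrow> nat"
  assumes finite_carrier: "finite (carrier G)"
    and nim_rep: "ng_nim_rep G \<alpha> M \<rho>"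
begin

lemma finite_M: "finite M"
  using nim_rep unfolding ng_nim_rep_def by blast

lemma act_one: "m \<in> M \<Longrightarrow> m' \<in> M \<Longrightarrow> \<rho> (Gel \<one>) m m' = (if m = m' then 1 else 0)"
  using nim_rep unfolding ng_nim_rep_def by blast

lemma act_assoc:
  "a \<in> ng_basis G \<Longrightarrow> b \<in> ng_basis G \<Longrightarrow> m \<in> M \<Longrightarrow> m' \<in> M \<Longrightarrow>
    (\<Sum>k\<in>M. \<rho> b m k * \<rho> a k m') = (\<Sum>c\<in>ng_basis G. ng_coeff G \<alpha> a b c * \<rho> c m m')"
  using nim_rep unfolding ng_nim_rep_def by blast

lemma act_dual: "b \<in> ng_basis G \<Longrightarrow> m \<in> M \<Longrightarrow> m' \<in> M \<Longrightarrow> \<rho> b m m' = \<rho> (ng_dual G b) m' m"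
  using nim_rep unfolding ng_nim_rep_def by blast

lemma Gel_in_ng_basis: "g \<in> carrier G \<Longrightarrow> Gel g \<in> ng_basis G"
  unfolding ng_basis_def by simp

lemma Xel_in_ng_basis: "Xel \<in> ng_basis G"
  unfolding ng_basis_def by simp

lemma act_mult:
  assumes "g \<in> carrier G" "h \<in> carrier G" "m \<in> M" "m' \<in> M"
  shows "(\<Sum>k\<in>M. \<rho> (Gel h) m k * \<rho> (Gel g) k m') = \<rho> (Gel (g \<otimes> h)) m m'"
  using assms act_assoc[OF Gel_in_ng_basis Gel_in_ng_basis]
    sum_ng_basis_delta[OF finite_carrier Gel_in_ng_basis[of "g \<otimes> h"]]
  by simp

lemma act_mult_X:
  assumes "g \<in> carrier G" "m \<in> M" "m' \<in> M"
  shows "(\<Sum>k\<in>M. \<rho> (Gel g) m k * \<rho> Xel k m') = \<rho> Xel m m'"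
  using assms act_assoc[OF Xel_in_ng_basis Gel_in_ng_basis]
    sum_ng_basis_delta[OF finite_carrier Xel_in_ng_basis]
  by simp

lemma X_squared:
  assumes "m \<in> M" "m' \<in> M"
  shows "(\<Sum>k\<in>M. \<rho> Xel m k * \<rho> Xel k m') = (\<Sum>g\<in>carrier G. \<rho> (Gel g) m m') + \<alpha> * \<rho> Xel m m'"
proof -
  have "(\<Sum>k\<in>M. \<rho> Xel m k * \<rho> Xel k m') =
      (\<Sum>c\<in>insert Xel (Gel ` carrier G). ng_coeff G \<alpha> Xel Xel c * \<rho> c m m')"
    using act_assoc[OF Xel_in_ng_basis Xel_in_ng_basis assms] by (simp add: ng_basis_def)
  also have "\<dots> = \<alpha> * \<rho> Xel m m' + (\<Sum>c\<in>Gel ` carrier G. ng_coeff G \<alpha> Xel Xel c * \<rho> c m m')"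
    using finite_carrier by (subst sum.insert) auto
  also have "(\<Sum>c\<in>Gel ` carrier G. ng_coeff G \<alpha> Xel Xel c * \<rho> c m m') = (\<Sum>g\<in>carrier G. \<rho> (Gel g) m m')"
    by (subst sum.reindex) (auto simp: inj_on_def)
  finally show ?thesis
    by simp
qed

lemma act_row_unit_vector:
  assumes g: "g \<in> carrier G" and m: "m \<in> M"
  shows "\<exists>k\<in>M. \<rho> (Gel g) m k = 1 \<and> (\<forall>k'\<in>M. k' \<noteq> k \<longrightarrow> \<rho> (Gel g) m k' = 0)"
proof -
  have "(\<Sum>k\<in>M. \<rho> (Gel g) m k * \<rho> (Gel (inv g)) k m) = 1"
    using act_mult[OF inv_closed[OF g] g m m] act_one[OF m m] g by simp
  moreover have "\<rho> (Gel (inv g)) k m = \<rho> (Gel g) m k" if "k \<in> M" for k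
    using act_dual[OF Gel_in_ng_basis[OF g] m that] by simp
  ultimately have "(\<Sum>k\<in>M. (\<rho> (Gel g) m k)\<^sup>2) = 1"
    by (simp add: power2_eq_square)
  then show ?thesis
    using sum_power2_eq_1_imp_unit_vector finite_M by blast
qed

lemma act_sum_eq:
  assumes g: "g \<in> carrier G" and "m \<in> M" "k \<in> M" and "\<rho> (Gel g) m k \<noteq> 0"
  shows "(\<Sum>k'\<in>M. \<rho> (Gel g) m k' * F k') = F k"
proof -
  obtain k0 where "\<rho> (Gel g) m k0 = 1" and others: "\<forall>k'\<in>M. k' \<noteq> k0 \<longrightarrow> \<rho> (Gel g) m k' = 0"
    using act_row_unit_vector[OF g \<open>m \<in> M\<close>] by blast
  moreover have "k = k0"
    using others assms(3,4) by auto
  ultimately have "\<rho> (Gel g) m k = 1" and "\<forall>k'\<in>M - {k}. \<rho> (Gel g) m k' = 0"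
    by auto
  have "(\<Sum>k'\<in>M. \<rho> (Gel g) m k' * F k') = \<rho> (Gel g) m k * F k + (\<Sum>k'\<in>M-{k}. \<rho> (Gel g) m k' * F k')"
    using finite_M \<open>k \<in> M\<close> by (rule sum.remove)
  also have "(\<Sum>k'\<in>M-{k}. \<rho> (Gel g) m k' * F k') = 0"
    using \<open>\<forall>k'\<in>M - {k}. \<rho> (Gel g) m k' = 0\<close> by simp
  finally show ?thesis
    using \<open>\<rho> (Gel g) m k = 1\<close> by simp
qed

lemma act_row_sum:
  assumes "g \<in> carrier G" "m \<in> M"
  shows "(\<Sum>k\<in>M. \<rho> (Gel g) m k) = 1"
  using act_row_unit_vector[OF assms] act_sum_eq[OF assms, of _ "\<lambda>_. 1"] by force

lemma X_invariant_under_act: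
  assumes "g \<in> carrier G" "m \<in> M" "k \<in> M" "m' \<in> M" "\<rho> (Gel g) m k \<noteq> 0"
  shows "\<rho> Xel k m' = \<rho> Xel m m'"
  using act_sum_eq[OF assms(1-3,5), of "\<lambda>k. \<rho> Xel k m'"] act_mult_X[OF assms(1,2,4)] by simp

lemma G_orbit_subset: "G_orbit G M \<rho> m \<subseteq> M"
  unfolding G_orbit_def by auto

lemma self_in_G_orbit: "m \<in> M \<Longrightarrow> m \<in> G_orbit G M \<rho> m"
  unfolding G_orbit_def using act_one by (auto intro!: bexI[of _ \<one>])

lemma G_orbit_sym:
  assumes "m' \<in> G_orbit G M \<rho> m" "m \<in> M"
  shows "m \<in> G_orbit G M \<rho> m'"
proof -
  obtain g where g: "g \<in> carrier G" "\<rho> (Gel g) m m' \<noteq> 0" "m' \<in> M"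
    using assms unfolding G_orbit_def by blast
  then have "\<rho> (Gel (inv g)) m' m \<noteq> 0"
    using act_dual[OF Gel_in_ng_basis[OF g(1)] assms(2) g(3)] by simp
  then show ?thesis
    using g assms(2) unfolding G_orbit_def by (auto intro!: bexI[of _ "inv g"])
qed

lemma G_orbit_trans:
  assumes "m' \<in> G_orbit G M \<rho> m" "m'' \<in> G_orbit G M \<rho> m'" "m \<in> M"
  shows "m'' \<in> G_orbit G M \<rho> m"
proof -
  obtain h where h: "h \<in> carrier G" "\<rho> (Gel h) m m' \<noteq> 0" "m' \<in> M"
    using assms unfolding G_orbit_def by blast
  obtain g where g: "g \<in> carrier G" "\<rho> (Gel g) m' m'' \<noteq> 0" "m'' \<in> M"
    using assms unfolding G_orbit_def by blast
  have "0 < \<rho> (Gel h) m m' * \<rho> (Gel g) m' m''"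
    using h g by simp
  also have "\<dots> \<le> (\<Sum>k\<in>M. \<rho> (Gel h) m k * \<rho> (Gel g) k m'')"
    using h finite_M by (intro member_le_sum) auto
  also have "\<dots> = \<rho> (Gel (g \<otimes> h)) m m''"
    using act_mult[OF g(1) h(1) assms(3) g(3)] .
  finally show ?thesis
    using g h unfolding G_orbit_def by (auto intro!: bexI[of _ "g \<otimes> h"])
qed

lemma G_orbit_eq:
  assumes "m' \<in> G_orbit G M \<rho> m" "m \<in> M"
  shows "G_orbit G M \<rho> m' = G_orbit G M \<rho> m"
proof -
  have "m' \<in> M" "m \<in> G_orbit G M \<rho> m'"
    using assms G_orbit_subset G_orbit_sym by blast+
  then show ?thesis
    using G_orbit_trans assms by blast
qed

lemma X_const_on_G_orbits:
  assumes "m' \<in> G_orbit G M \<rho> m" "k' \<in> G_orbit G M \<rho> k" "m \<in> M" "k \<in> M"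
  shows "\<rho> Xel m' k' = \<rho> Xel m k"
proof -
  have "m' \<in> M" "k' \<in> M"
    using assms G_orbit_subset by blast+
  have "\<rho> Xel m' k' = \<rho> Xel m k'"
    using assms(1) \<open>k' \<in> M\<close> unfolding G_orbit_def by (blast intro: X_invariant_under_act assms(3))
  also have "\<dots> = \<rho> Xel k' m"
    using act_dual[OF Xel_in_ng_basis assms(3) \<open>k' \<in> M\<close>] by simp
  also have "\<dots> = \<rho> Xel k m"
    using assms(2) unfolding G_orbit_def by (blast intro: X_invariant_under_act assms(3,4))
  also have "\<dots> = \<rho> Xel m k"
    using act_dual[OF Xel_in_ng_basis assms(4,3)] by simp
  finally show ?thesis .
qed

lemma sum_act_over_M: "m \<in> M \<Longrightarrow> (\<Sum>m'\<in>M. \<Sum>g\<in>carrier G. \<rho> (Gel g) m m') = card (carrier G)"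
  by (subst sum.swap) (simp add: act_row_sum)

end

locale near_group_nim_orbits = near_group_nim +
  fixes p :: nat and Orb :: "nat \<Rightarrow> 'm set" and H :: "nat \<Rightarrow> 'g set"
  assumes Orb_G_orbit: "i \<in> {1..p} \<Longrightarrow> \<exists>m\<in>M. Orb i = G_orbit G M \<rho> m"
    and Orb_distinct: "i \<in> {1..p} \<Longrightarrow> j \<in> {1..p} \<Longrightarrow> i \<noteq> j \<Longrightarrow> Orb i \<noteq> Orb j"
    and Orb_cover: "(\<Union>i\<in>{1..p}. Orb i) = M"
    and subgroup_H: "i \<in> {1..p} \<Longrightarrow> subgroup (H i) G"
    and Orb_iso_cosets: "i \<in> {1..p} \<Longrightarrow> Gset_iso_cosets G \<rho> (Orb i) (H i)"
begin

abbreviation c :: "nat \<Rightarrow> nat \<Rightarrow> nat" where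
  "c i j \<equiv> orbit_coeff \<rho> Orb i j"

lemma Orb_subset: "i \<in> {1..p} \<Longrightarrow> Orb i \<subseteq> M"
  using Orb_cover by blast

lemma Orb_eq_G_orbit:
  assumes "i \<in> {1..p}" "m \<in> Orb i"
  shows "Orb i = G_orbit G M \<rho> m"
proof -
  obtain a where "a \<in> M" "Orb i = G_orbit G M \<rho> a"
    using Orb_G_orbit[OF assms(1)] by blast
  then show ?thesis
    using G_orbit_eq[of m a] assms(2) by simp
qed

lemma some_in_Orb:
  assumes "i \<in> {1..p}"
  shows "(SOME m. m \<in> Orb i) \<in> Orb i"
proof -
  obtain a where "a \<in> M" "Orb i = G_orbit G M \<rho> a"
    using Orb_G_orbit[OF assms] by blast
  then have "a \<in> Orb i"
    using self_in_G_orbit by simp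
  then show ?thesis
    by (rule someI)
qed

lemma X_on_Orb:
  assumes "i \<in> {1..p}" "j \<in> {1..p}" "m \<in> Orb i" "k \<in> Orb j"
  shows "\<rho> Xel m k = c i j"
proof -
  let ?m0 = "SOME m. m \<in> Orb i" and ?k0 = "SOME k. k \<in> Orb j"
  have "?m0 \<in> Orb i" "?k0 \<in> Orb j"
    using some_in_Orb assms(1,2) by blast+
  then have "m \<in> G_orbit G M \<rho> ?m0" "k \<in> G_orbit G M \<rho> ?k0" "?m0 \<in> M" "?k0 \<in> M"
    using Orb_eq_G_orbit Orb_subset assms by blast+
  then show ?thesis
    unfolding orbit_coeff_def by (rule X_const_on_G_orbits)
qed

lemma Orb_disjoint:
  assumes "i \<in> {1..p}" "j \<in> {1..p}" "i \<noteq> j"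
  shows "Orb i \<inter> Orb j = {}"
proof (rule ccontr)
  assume "Orb i \<inter> Orb j \<noteq> {}"
  then obtain m where "m \<in> Orb i" "m \<in> Orb j"
    by blast
  then have "Orb i = Orb j"
    using Orb_eq_G_orbit[OF assms(1) \<open>m \<in> Orb i\<close>] Orb_eq_G_orbit[OF assms(2) \<open>m \<in> Orb j\<close>] by simp
  then show False
    using Orb_distinct assms by blast
qed

lemma sum_over_Orb: "(\<Sum>k\<in>M. f k) = (\<Sum>j\<in>{1..p}. \<Sum>k\<in>Orb j. f k)"
proof -
  have "finite (Orb j)" if "j \<in> {1..p}" for j
    using Orb_subset[OF that] finite_M finite_subset by blast
  then show ?thesis
    unfolding Orb_cover[symmetric] using Orb_disjoint by (intro sum.UNION_disjoint) auto
qed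

lemma card_Orb_mult_card_H: "i \<in> {1..p} \<Longrightarrow> card (Orb i) * card (H i) = card (carrier G)"
  using card_mult_card_subgroup_if_iso_cosets[OF is_group finite_carrier subgroup_H Orb_iso_cosets] .

lemma card_H_pos: "i \<in> {1..p} \<Longrightarrow> card (H i) > 0"
  using subgroup_H finite_carrier
  by (metis card_gt_0_iff empty_iff finite_subset subgroup.one_closed subgroup.subset)

lemma X_squared_on_Orb:
  assumes i: "i \<in> {1..p}" and q: "q \<in> {1..p}" and "m \<in> Orb i" "m' \<in> Orb q"
  shows "(\<Sum>j\<in>{1..p}. card (Orb j) * (c i j * c j q)) = (\<Sum>g\<in>carrier G. \<rho> (Gel g) m m') + \<alpha> * c i q"
proof -
  have "(\<Sum>j\<in>{1..p}. card (Orb j) * (c i j * c j q)) = (\<Sum>j\<in>{1..p}. \<Sum>k\<in>Orb j. \<rho> Xel m k * \<rho> Xel k m')"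
    using X_on_Orb assms by (intro sum.cong) auto
  also have "\<dots> = (\<Sum>k\<in>M. \<rho> Xel m k * \<rho> Xel k m')"
    by (rule sum_over_Orb[symmetric])
  also have "\<dots> = (\<Sum>g\<in>carrier G. \<rho> (Gel g) m m') + \<alpha> * c i q"
    using X_squared[of m m'] Orb_subset[OF i] Orb_subset[OF q] assms(3,4) X_on_Orb[OF i q assms(3,4)]
    by auto
  finally show ?thesis .
qed

lemma alpha_eq_single_orbit:
  assumes "p = 1"
  shows "real \<alpha> = real (c 1 1) * (real (card (carrier G)) / real (card (H 1)))
                   - real (card (H 1)) / real (c 1 1)"
proof -
  have one: "1 \<in> {1..p}" and "Orb 1 = M"
    using assms Orb_cover by auto
  define n h N C where "n = card M" and "h = card (H 1)" and "N = card (carrier G)" and "C = c 1 1"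
  obtain m where m: "m \<in> M"
    using nim_rep unfolding ng_nim_rep_def by blast
  have "n * h = N"
    using card_Orb_mult_card_H[OF one] \<open>Orb 1 = M\<close> by (simp add: n_def h_def N_def)
  have "n * (C * C) = (\<Sum>g\<in>carrier G. \<rho> (Gel g) m m') + \<alpha> * C" if "m' \<in> M" for m'
    using X_squared_on_Orb[OF one one, of m m'] \<open>Orb 1 = M\<close> m that assms by (simp add: n_def C_def)
  then have "(\<Sum>m'\<in>M. n * (C * C)) = (\<Sum>m'\<in>M. (\<Sum>g\<in>carrier G. \<rho> (Gel g) m m') + \<alpha> * C)"
    by (intro sum.cong) auto
  then have "n * (n * (C * C)) = (\<Sum>m'\<in>M. \<Sum>g\<in>carrier G. \<rho> (Gel g) m m') + n * (\<alpha> * C)"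
    by (simp add: sum.distrib n_def)
  also have "\<dots> = n * (h + \<alpha> * C)"
    using sum_act_over_M[OF m] \<open>n * h = N\<close> by (simp add: N_def distrib_left)
  finally have "n * (C * C) = h + \<alpha> * C"
    using m finite_M by (auto simp: n_def)
  moreover have "h > 0"
    using card_H_pos[OF one] h_def by simp
  ultimately have "C > 0"
    by (cases C) auto
  have "real \<alpha> * real C = real n * real C * real C - real h"
    using arg_cong[OF \<open>n * (C * C) = h + \<alpha> * C\<close>, of real] by simp
  then have "real \<alpha> = real n * real C - real h / real C"
    using \<open>C > 0\<close> by (simp add: field_simps)
  moreover have "real n = real N / real h"
    using \<open>n * h = N\<close> \<open>h > 0\<close> by (simp add: field_simps flip: of_nat_mult)
  ultimately show ?thesis
    by (simp add: C_def N_def h_def mult.commute)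
qed

lemma alpha_eq_via_offdiagonal_coeff:
  assumes i: "i \<in> {1..p}" and q: "q \<in> {1..p}" and "i \<noteq> q" "c i q > 0"
  shows "real \<alpha> = (\<Sum>j=1..p. real (c i j) * real (c j q) / real (c i q)
                             * (real (card (carrier G)) / real (card (H j))))"
proof -
  obtain m m' where m: "m \<in> Orb i" and m': "m' \<in> Orb q"
    using some_in_Orb[OF i] some_in_Orb[OF q] by blast
  have "\<rho> (Gel g) m m' = 0" if "g \<in> carrier G" for g
    using that m m' Orb_eq_G_orbit[OF i m] Orb_disjoint[OF i q \<open>i \<noteq> q\<close>] Orb_subset[OF q]
    unfolding G_orbit_def by blast
  then have "(\<Sum>j\<in>{1..p}. card (Orb j) * (c i j * c j q)) = \<alpha> * c i q"
    using X_squared_on_Orb[OF i q m m'] by simp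
  then have real_identity: "(\<Sum>j\<in>{1..p}. real (card (Orb j)) * (real (c i j) * real (c j q))) = real \<alpha> * real (c i q)"
    by (metis (no_types, lifting) of_nat_mult of_nat_sum sum.cong)
  have "real (card (Orb j)) = real (card (carrier G)) / real (card (H j))" if "j \<in> {1..p}" for j
    using card_Orb_mult_card_H[OF that] card_H_pos[OF that]
    by (simp add: field_simps flip: of_nat_mult)
  then have "(\<Sum>j=1..p. real (c i j) * real (c j q) / real (c i q)
                             * (real (card (carrier G)) / real (card (H j))))
      = (\<Sum>j\<in>{1..p}. real (card (Orb j)) * (real (c i j) * real (c j q))) / real (c i q)"
    by (simp add: sum_divide_distrib mult_ac)
  also have "\<dots> = real \<alpha>"
    using real_identity \<open>c i q > 0\<close> by simp
  finally show ?thesis ..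
qed

end

theorem corollary3p21:
  fixes G :: "('g, 'b) monoid_scheme" and \<alpha> :: nat and M :: "'m set"
    and \<rho> :: "'g ng_basis \<Rightarrow> 'm \<Rightarrow> 'm \<Rightarrow> nat"
    and p :: nat and Orb :: "nat \<Rightarrow> 'm set" and H :: "nat \<Rightarrow> 'g set"
  assumes grp: "group G" and fin: "finite (carrier G)"
    and nim: "ng_nim_rep G \<alpha> M \<rho>" and irr: "ng_nim_irreducible G M \<rho>"
    and p_pos: "p \<ge> 1"
    and orbits: "\<forall>i\<in>{1..p}. \<exists>m\<in>M. Orb i = G_orbit G M \<rho> m"
    and distinct: "\<forall>i\<in>{1..p}. \<forall>j\<in>{1..p}. i \<noteq> j \<longrightarrow> Orb i \<noteq> Orb j"
    and cover: "(\<Union>i\<in>{1..p}. Orb i) = M"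
    and subgrp: "\<forall>i\<in>{1..p}. subgroup (H i) G"
    and iso: "\<forall>i\<in>{1..p}. Gset_iso_cosets G \<rho> (Orb i) (H i)"
  shows "(p = 1 \<longrightarrow>
            real \<alpha> = real (orbit_coeff \<rho> Orb 1 1) * (real (card (carrier G)) / real (card (H 1)))
                      - real (card (H 1)) / real (orbit_coeff \<rho> Orb 1 1))
       \<and> (p \<ge> 2 \<longrightarrow>
            (\<forall>i\<in>{1..p}. \<forall>q\<in>{1..p}. i \<noteq> q \<longrightarrow> orbit_coeff \<rho> Orb i q > 0 \<longrightarrow>
               real \<alpha> = (\<Sum>j=1..p. real (orbit_coeff \<rho> Orb i j) * real (orbit_coeff \<rho> Orb j q)
                                       / real (orbit_coeff \<rho> Orb i q)
                                       * (real (card (carrier G)) / real (card (H j))))))"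
proof -
  interpret near_group_nim_orbits G \<alpha> M \<rho> p Orb H
    using grp fin nim orbits distinct cover subgrp iso
    by (simp add: near_group_nim_orbits_def near_group_nim_orbits_axioms_def
        near_group_nim_def near_group_nim_axioms_def)
  show ?thesis
    using alpha_eq_single_orbit alpha_eq_via_offdiagonal_coeff by blast
qed

end
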